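(* For every $v\in\{0,\dots,n-1\}$, every $\pi\in\Pi$ and every $f_{\mathcal E_v^+}\in\mathcal F_v$, $$\sum_{e\in\mathcal E_v^+}\sigma_e\big(\lambda^\pi_v\,G^v_e(f_{\mathcal E_v^+},\pi)-f^\pi_e\big)\le0,$$ where $\lambda^\pi_v:=\sum_{e\in\mathcal E_v^+}f^\pi_e$ and $\sigma_e:=\mathrm{sgn}(f_e-f^\pi_e)$ (with $\mathrm{sgn}(0)=0$).
   Context: $\mathcal G=(\mathcal V,\mathcal E)$ is a finite directed graph with $\mathcal V=\{0,1,\dots,n\}$, containing no directed cycle, in which node $0$ is the unique node with no incoming link, node $n$ is the unique node with no outgoing link, there is a directed path from every node to $n$, and every link $(u,v)\in\mathcal E$ satisfies $u<v$. For $v\in\mathcal V$, $\mathcal E_v^-$ and $\mathcal E_v^+$ are the sets of links entering and leaving $v$. Each link $e$ has a capacity $C_e\in(0,+\infty]$; $\mathcal F_v:=\prod_{e\in\mathcal E_v^+}[0,C_e)$. $\mathcal P$ is the set of directed paths from $0$ to $n$, $A$ the link-path incidence matrix ($A_{ep}=1$ iff $e\in p$), $\mathcal S(\cdot)$ denotes a probability simplex, $\Pi:=\{\pi\in\mathcal S(\mathcal P):(A\pi)_e<C_e\ \forall e\}$, and $f^\pi:=A\pi$. For each $v\in\{0,\dots,n-1\}$ a continuously differentiable $G^v:\mathcal F_v\times\Pi\to\mathcal S(\mathcal E_v^+)$ is given such that (consistency) $(\sum_{j\in\mathcal E_v^+}f^\pi_j)\,G^v_e(f^\pi_{\mathcal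 E_v^+},\pi)=f^\pi_e$ for all $\pi\in\Pi$, $e\in\mathcal E_v^+$, where $f^\pi_{\mathcal E_v^+}=(f^\pi_j)_{j\in\mathcal E_v^+}$; and (cooperativity) $\partial G^v_j(f_{\mathcal E_v^+},\pi)/\partial f_e\ge0$ for all $\pi\in\Pi$, $f_{\mathcal E_v^+}\in\mathcal F_v$, $j\neq e\in\mathcal E_v^+$. *)

theory Defs
  imports "HOL-Analysis.Analysis"
begin

definition out_links :: "(nat \<times> nat) set \<Rightarrow> nat \<Rightarrow> (nat \<times> nat) set" where
  "out_links E v = {e \<in> E. fst e = v}"

definition in_links :: "(nat \<times> nat) set \<Rightarrow> nat \<Rightarrow> (nat \<times> nat) set" where
  "in_links E v = {e \<in> E. snd e = v}"

definition paths :: "(nat \<times> nat) set \<Rightarrow> nat \<Rightarrow> nat list set" where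
  "paths E n = {p. p \<noteq> [] \<and> hd p = 0 \<and> last p = n \<and>
                   (\<forall>i. Suc i < length p \<longrightarrow> (p ! i, p ! Suc i) \<in> E)}"

text \<open>Links of a path (e is in p iff A_{ep} = 1).\<close>
definition path_links :: "nat list \<Rightarrow> (nat \<times> nat) set" where
  "path_links p = set (zip p (tl p))"

text \<open>Link flow f^pi = A pi.\<close>
definition link_flow :: "(nat \<times> nat) set \<Rightarrow> nat \<Rightarrow> (nat list \<Rightarrow> real) \<Rightarrow> (nat \<times> nat) \<Rightarrow> real" where
  "link_flow E n \<pi> e = (\<Sum>p\<in>paths E n. (if e \<in> path_links p then 1 else 0) * \<pi> p)"

definition Pi_feas :: "(nat \<times> nat) set \<Rightarrow> nat \<Rightarrow> ((nat \<times> nat) \<Rightarrow> ereal) \<Rightarrow> (nat list \<Rightarrow> real) set" where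
  "Pi_feas E n C = {\<pi>. (\<forall>p\<in>paths E n. 0 \<le> \<pi> p) \<and> (\<forall>p. p \<notin> paths E n \<longrightarrow> \<pi> p = 0) \<and>
       sum \<pi> (paths E n) = 1 \<and> (\<forall>e\<in>E. ereal (link_flow E n \<pi> e) < C e)}"

text \<open>F_v: vectors indexed by the outgoing links of v (extended by 0 elsewhere).\<close>
definition F_box :: "(nat \<times> nat) set \<Rightarrow> ((nat \<times> nat) \<Rightarrow> ereal) \<Rightarrow> nat \<Rightarrow> ((nat \<times> nat) \<Rightarrow> real) set" where
  "F_box E C v = {f. (\<forall>e\<in>out_links E v. 0 \<le> f e \<and> ereal (f e) < C e) \<and>
                      (\<forall>e. e \<notin> out_links E v \<longrightarrow> f e = 0)}"

definition restr_out :: "(nat \<times> nat) set \<Rightarrow> nat \<Rightarrow> ((nat \<times> nat) \<Rightarrow> real) \<Rightarrow> (nat \<times> nat) \<Rightarrow> real" where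
  "restr_out E v f = (\<lambda>e. if e \<in> out_links E v then f e else 0)"

text \<open>Partial derivative of G^v_j with respect to f_e (one-sided at the boundary of F_v).\<close>
definition partial_G ::
  "((nat \<times> nat) \<Rightarrow> ereal) \<Rightarrow> (nat \<Rightarrow> ((nat \<times> nat) \<Rightarrow> real) \<Rightarrow> (nat list \<Rightarrow> real) \<Rightarrow> (nat \<times> nat) \<Rightarrow> real)
    \<Rightarrow> nat \<Rightarrow> (nat \<times> nat) \<Rightarrow> (nat \<times> nat) \<Rightarrow> ((nat \<times> nat) \<Rightarrow> real) \<Rightarrow> (nat list \<Rightarrow> real) \<Rightarrow> real" where
  "partial_G C G v j e f \<pi> =
     vector_derivative (\<lambda>t. G v (f(e := t)) \<pi> j) (at (f e) within {t. 0 \<le> t \<and> ereal t < C e})"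

end

theory Submission
  imports Defs
begin

(* Fix a node v, a feasible path distribution \<pi> and a local flow f in F_v, and
   write f\<pi> for the restriction to the links leaving v of the link flow of \<pi>, and lam for
   its total.  Consistency says lam * G(f\<pi>) = f\<pi> on these links, so the sum equals lam times
   the excess of G(f) over G(f\<pi>) on the links I+ where f > f\<pi>, plus lam times the deficit
   on the links I- where f < f\<pi>.  It suffices that G(f) gives at most the share of G(f\<pi>)
   to I+ and, symmetrically, at least that share to I-. *)

lemma nondecreasing_of_nonneg_derivative:
  fixes g g' :: "real \<Rightarrow> real" and S :: "real set"
  assumes deriv: "\<And>t. t \<in> S \<Longrightarrow> (g has_vector_derivative g' t) (at t within S)"
    and nonneg: "\<And>t. t \<in> S \<Longrightarrow> 0 \<le> g' t"
    and interval: "{a..b} \<subseteq> S" and "a \<le> b"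
  shows "g a \<le> g b"
proof -
  have "\<exists>x\<in>{a..b}. g b - g a = (\<lambda>h. h *\<^sub>R g' x) (b - a)"
    using deriv interval unfolding has_vector_derivative_def
    by (intro mvt_very_simple[OF \<open>a \<le> b\<close>])
      (meson atLeastAtMost_iff has_derivative_subset subsetD)
  then obtain x where "x \<in> {a..b}" "g b - g a = (b - a) * g' x" by auto
  moreover have "0 \<le> g' x" using nonneg interval \<open>x \<in> {a..b}\<close> by auto
  then have "0 \<le> (b - a) * g' x" using \<open>a \<le> b\<close> by simp
  ultimately show ?thesis by linarith
qed

lemma raise_coordinate_monotone:
  assumes diff: "\<And>h. h \<in> F_box E C v \<Longrightarrow>
      (\<lambda>t. G v (h(e := t)) \<pi> j) differentiable (at (h e) within {t. 0 \<le> t \<and> ereal t < C e})"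
    and coop: "\<And>h. h \<in> F_box E C v \<Longrightarrow> 0 \<le> partial_G C G v j e h \<pi>"
    and f: "f \<in> F_box E C v" and raised: "f(e := t) \<in> F_box E C v"
    and e: "e \<in> out_links E v" and "f e \<le> t"
  shows "G v f \<pi> j \<le> G v (f(e := t)) \<pi> j"
proof -
  define S where "S = {t. 0 \<le> t \<and> ereal t < C e}"
  define g where "g = (\<lambda>s. G v (f(e := s)) \<pi> j)"
  have in_box: "f(e := s) \<in> F_box E C v" if "s \<in> S" for s
    using f that e unfolding F_box_def S_def by auto
  have deriv: "(g has_vector_derivative partial_G C G v j e (f(e := s)) \<pi>) (at s within S)"
    if "s \<in> S" for s
  proof -
    have "g differentiable (at s within S)"
      using diff[OF in_box[OF that]] unfolding g_def S_def by simp
    then show ?thesis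
      using vector_derivative_works unfolding partial_G_def g_def S_def by fastforce
  qed
  have nonneg: "0 \<le> partial_G C G v j e (f(e := s)) \<pi>" if "s \<in> S" for s
    using coop[OF in_box[OF that]] .
  have "ereal t < C e" "0 \<le> f e" using f raised e unfolding F_box_def by auto
  then have interval: "{f e..t} \<subseteq> S"
    unfolding S_def by (auto intro: le_less_trans[of _ "ereal t"])
  have "g (f e) \<le> g t"
    using deriv nonneg interval \<open>f e \<le> t\<close> by (rule nondecreasing_of_nonneg_derivative)
  then show ?thesis unfolding g_def by simp
qed

lemma signed_deviation_sum_nonpos:
  fixes L :: "'a set" and f \<phi> p q :: "'a \<Rightarrow> real"
  assumes "finite L" and "0 \<le> lam" and scaled: "\<And>e. e \<in> L \<Longrightarrow> \<phi> e = lam * q e"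
    and up: "(\<Sum>e\<in>{e\<in>L. \<phi> e < f e}. p e) \<le> (\<Sum>e\<in>{e\<in>L. \<phi> e < f e}. q e)"
    and down: "(\<Sum>e\<in>{e\<in>L. f e < \<phi> e}. q e) \<le> (\<Sum>e\<in>{e\<in>L. f e < \<phi> e}. p e)"
  shows "(\<Sum>e\<in>L. sgn (f e - \<phi> e) * (lam * p e - \<phi> e)) \<le> 0"
proof -
  define Up where "Up = {e\<in>L. \<phi> e < f e}"
  define Dn where "Dn = {e\<in>L. f e < \<phi> e}"
  have "(\<Sum>e\<in>L. sgn (f e - \<phi> e) * (lam * p e - \<phi> e))
      = (\<Sum>e\<in>L. lam * (if e \<in> Up then p e - q e else 0)
               + lam * (if e \<in> Dn then q e - p e else 0))"
    using scaled unfolding Up_def Dn_def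
    by (intro sum.cong) (auto simp: sgn_if algebra_simps)
  also have "\<dots> = lam * (\<Sum>e\<in>Up. p e - q e) + lam * (\<Sum>e\<in>Dn. q e - p e)"
    using \<open>finite L\<close> unfolding Up_def Dn_def
    by (simp add: sum.distrib sum.inter_filter sum_distrib_left[symmetric])
  also have "\<dots> \<le> 0"
    using up down \<open>0 \<le> lam\<close> unfolding Up_def Dn_def
    by (simp add: sum_subtractf mult_nonneg_nonpos add_nonpos_nonpos)
  finally show ?thesis .
qed

locale cooperative_box =
  fixes B :: "('a \<Rightarrow> real) set" and L :: "'a set" and H :: "('a \<Rightarrow> real) \<Rightarrow> 'a \<Rightarrow> real"
  assumes update_closed: "\<And>f g k. f \<in> B \<Longrightarrow> g \<in> B \<Longrightarrow> f(k := g k) \<in> B"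
    and min_closed: "\<And>f g. f \<in> B \<Longrightarrow> g \<in> B \<Longrightarrow> (\<lambda>e. min (f e) (g e)) \<in> B"
    and raise_monotone: "\<And>f k j t. f \<in> B \<Longrightarrow> f(k := t) \<in> B \<Longrightarrow> k \<in> L \<Longrightarrow> j \<in> L \<Longrightarrow>
        j \<noteq> k \<Longrightarrow> f k \<le> t \<Longrightarrow> H f j \<le> H (f(k := t)) j"
begin

lemma monotone_outside:
  assumes "finite K" "K \<subseteq> L"
  shows "\<lbrakk>f \<in> B; g \<in> B; \<forall>e. f e \<le> g e; \<forall>e. e \<notin> K \<longrightarrow> f e = g e; j \<in> L - K\<rbrakk>
    \<Longrightarrow> H f j \<le> H g j"
  using assms
proof (induction K arbitrary: f rule: finite_induct)
  case empty
  then have "f = g" by auto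
  then show ?case by simp
next
  case (insert k K)
  define f' where "f' = f(k := g k)"
  have "f' \<in> B" unfolding f'_def using update_closed insert.prems by blast
  have "H f j \<le> H f' j"
    using insert.prems \<open>f' \<in> B\<close> unfolding f'_def by (intro raise_monotone) auto
  also have "\<dots> \<le> H g j"
  proof (rule insert.IH[OF \<open>f' \<in> B\<close> \<open>g \<in> B\<close>])
    show "\<forall>e. f' e \<le> g e" "\<forall>e. e \<notin> K \<longrightarrow> f' e = g e" "j \<in> L - K"
      using insert.prems unfolding f'_def by auto
    show "K \<subseteq> L" using insert.prems by simp
  qed
  finally show ?case .
qed

text \<open>Both f and g are compared
  with min f g, which agrees with f off those coordinates and with g on them.\<close>
lemma share_comparison:
  assumes simplex: "\<And>f. f \<in> B \<Longrightarrow> (\<Sum>e\<in>L. H f e) = 1"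
    and "finite L" and f: "f \<in> B" and g: "g \<in> B" and outside: "\<forall>e. e \<notin> L \<longrightarrow> f e = g e"
  shows "(\<Sum>e\<in>{e\<in>L. g e < f e}. H f e) \<le> (\<Sum>e\<in>{e\<in>L. g e < f e}. H g e)"
proof -
  define I where "I = {e\<in>L. g e < f e}"
  define J where "J = {e\<in>L. f e < g e}"
  define m where "m = (\<lambda>e. min (f e) (g e))"
  have "m \<in> B" unfolding m_def using min_closed f g .
  have "I \<subseteq> L" "J \<subseteq> L" "finite I" "finite J"
    using \<open>finite L\<close> unfolding I_def J_def by auto
  have m_f: "\<forall>e. m e \<le> f e" "\<forall>e. e \<notin> I \<longrightarrow> m e = f e"
    and m_g: "\<forall>e. m e \<le> g e" "\<forall>e. e \<notin> J \<longrightarrow> m e = g e"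
    using outside unfolding m_def I_def J_def by (auto simp: min_def)
  have m_le_f: "H m j \<le> H f j" if "j \<in> L - I" for j
    using monotone_outside[OF \<open>finite I\<close> \<open>I \<subseteq> L\<close> \<open>m \<in> B\<close> f m_f that] .
  have m_le_g: "H m j \<le> H g j" if "j \<in> L - J" for j
    using monotone_outside[OF \<open>finite J\<close> \<open>J \<subseteq> L\<close> \<open>m \<in> B\<close> g m_g that] .
  have complement: "(\<Sum>e\<in>I. H h e) = 1 - (\<Sum>e\<in>L - I. H h e)" if "h \<in> B" for h
    using sum.subset_diff[OF \<open>I \<subseteq> L\<close> \<open>finite L\<close>, of "H h"] simplex[OF that] by simp
  have "(\<Sum>e\<in>L - I. H m e) \<le> (\<Sum>e\<in>L - I. H f e)"
    using m_le_f by (rule sum_mono)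
  then have "(\<Sum>e\<in>I. H f e) \<le> (\<Sum>e\<in>I. H m e)"
    using complement[OF f] complement[OF \<open>m \<in> B\<close>] by linarith
  also have "\<dots> \<le> (\<Sum>e\<in>I. H g e)"
    using m_le_g unfolding I_def J_def by (intro sum_mono) auto
  finally show ?thesis unfolding I_def .
qed

lemma deviation_nonpos:
  assumes simplex: "\<And>f. f \<in> B \<Longrightarrow> (\<Sum>e\<in>L. H f e) = 1"
    and "finite L" and f: "f \<in> B" and g: "g \<in> B" and outside: "\<forall>e. e \<notin> L \<longrightarrow> f e = g e"
    and "0 \<le> lam" and fixed: "\<And>e. e \<in> L \<Longrightarrow> lam * H g e = g e"
  shows "(\<Sum>e\<in>L. sgn (f e - g e) * (lam * H f e - g e)) \<le> 0"
proof (rule signed_deviation_sum_nonpos[OF \<open>finite L\<close> \<open>0 \<le> lam\<close>])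
  show "g e = lam * H g e" if "e \<in> L" for e using fixed[OF that] by simp
  show "(\<Sum>e\<in>{e\<in>L. g e < f e}. H f e) \<le> (\<Sum>e\<in>{e\<in>L. g e < f e}. H g e)"
    using share_comparison[OF simplex \<open>finite L\<close> f g outside] .
  have "\<forall>e. e \<notin> L \<longrightarrow> g e = f e" using outside by simp
  then show "(\<Sum>e\<in>{e\<in>L. f e < g e}. H g e) \<le> (\<Sum>e\<in>{e\<in>L. f e < g e}. H f e)"
    using share_comparison[OF simplex \<open>finite L\<close> g f] by blast
qed

end

lemma F_box_update: "f \<in> F_box E C v \<Longrightarrow> g \<in> F_box E C v \<Longrightarrow> f(k := g k) \<in> F_box E C v"
  unfolding F_box_def by auto

lemma F_box_min:
  "f \<in> F_box E C v \<Longrightarrow> g \<in> F_box E C v \<Longrightarrow> (\<lambda>e. min (f e) (g e)) \<in> F_box E C v"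
  unfolding F_box_def by (auto simp: min_def)

lemma link_flow_nonneg: "\<pi> \<in> Pi_feas E n C \<Longrightarrow> 0 \<le> link_flow E n \<pi> e"
  unfolding Pi_feas_def link_flow_def by (auto intro!: sum_nonneg)

lemma restr_link_flow_in_F_box:
  "\<pi> \<in> Pi_feas E n C \<Longrightarrow> restr_out E v (link_flow E n \<pi>) \<in> F_box E C v"
  using link_flow_nonneg[of \<pi>] unfolding F_box_def restr_out_def Pi_feas_def out_links_def
  by auto

lemma cooperative_box_F_box:
  assumes diff: "\<forall>j\<in>out_links E v. \<forall>e\<in>out_links E v. \<forall>f\<in>F_box E C v.
        (\<lambda>t. G v (f(e := t)) \<pi> j) differentiable (at (f e) within {t. 0 \<le> t \<and> ereal t < C e})"
    and coop: "\<forall>f\<in>F_box E C v. \<forall>j\<in>out_links E v. \<forall>e\<in>out_links E v.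
        j \<noteq> e \<longrightarrow> 0 \<le> partial_G C G v j e f \<pi>"
  shows "cooperative_box (F_box E C v) (out_links E v) (\<lambda>h. G v h \<pi>)"
proof
  fix h k j t
  assume h: "h \<in> F_box E C v" and raised: "h(k := t) \<in> F_box E C v"
    and k: "k \<in> out_links E v" and j: "j \<in> out_links E v" and "j \<noteq> k" "h k \<le> t"
  show "G v h \<pi> j \<le> G v (h(k := t)) \<pi> j"
  proof (rule raise_coordinate_monotone[OF _ _ h raised k \<open>h k \<le> t\<close>])
    show "(\<lambda>s. G v (h'(k := s)) \<pi> j) differentiable (at (h' k) within {s. 0 \<le> s \<and> ereal s < C k})"
      if "h' \<in> F_box E C v" for h'
      using diff k j that by blast
    show "0 \<le> partial_G C G v j k h' \<pi>" if "h' \<in> F_box E C v" for h'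
      using coop k j \<open>j \<noteq> k\<close> that by blast
  qed
qed (fact F_box_update F_box_min)+

theorem lemma1:
  fixes n :: nat and E :: "(nat \<times> nat) set" and C :: "(nat \<times> nat) \<Rightarrow> ereal"
    and G :: "nat \<Rightarrow> ((nat \<times> nat) \<Rightarrow> real) \<Rightarrow> (nat list \<Rightarrow> real) \<Rightarrow> (nat \<times> nat) \<Rightarrow> real"
  assumes nodes: "E \<subseteq> {0..n} \<times> {0..n}"
    and order: "\<forall>(u, w) \<in> E. u < w"
    and source: "\<forall>w\<in>{0..n}. in_links E w = {} \<longleftrightarrow> w = 0"
    and sink: "\<forall>w\<in>{0..n}. out_links E w = {} \<longleftrightarrow> w = n"
    and reach: "\<forall>w\<in>{0..n}. (w, n) \<in> E\<^sup>*"
    and cap: "\<forall>e\<in>E. 0 < C e"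
    and G_simplex: "\<forall>v<n. \<forall>f\<in>F_box E C v. \<forall>\<pi>\<in>Pi_feas E n C.
         (\<forall>e\<in>out_links E v. 0 \<le> G v f \<pi> e) \<and> (\<Sum>e\<in>out_links E v. G v f \<pi> e) = 1"
    and G_cont: "\<forall>v<n. \<forall>j\<in>out_links E v.
         continuous_on (F_box E C v \<times> Pi_feas E n C) (\<lambda>(f, \<pi>). G v f \<pi> j)"
    and G_diff: "\<forall>v<n. \<forall>j\<in>out_links E v. \<forall>e\<in>out_links E v.
         (\<forall>f\<in>F_box E C v. \<forall>\<pi>\<in>Pi_feas E n C.
            (\<lambda>t. G v (f(e := t)) \<pi> j) differentiable (at (f e) within {t. 0 \<le> t \<and> ereal t < C e})) \<and>
         continuous_on (F_box E C v \<times> Pi_feas E n C) (\<lambda>(f, \<pi>). partial_G C G v j e f \<pi>)"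
    and consistency: "\<forall>v<n. \<forall>\<pi>\<in>Pi_feas E n C. \<forall>e\<in>out_links E v.
         (\<Sum>j\<in>out_links E v. link_flow E n \<pi> j) * G v (restr_out E v (link_flow E n \<pi>)) \<pi> e
           = link_flow E n \<pi> e"
    and cooperativity: "\<forall>v<n. \<forall>\<pi>\<in>Pi_feas E n C. \<forall>f\<in>F_box E C v. \<forall>j\<in>out_links E v. \<forall>e\<in>out_links E v.
         j \<noteq> e \<longrightarrow> 0 \<le> partial_G C G v j e f \<pi>"
  shows "\<forall>v<n. \<forall>\<pi>\<in>Pi_feas E n C. \<forall>f\<in>F_box E C v.
     (\<Sum>e\<in>out_links E v. sgn (f e - link_flow E n \<pi> e) *
        ((\<Sum>j\<in>out_links E v. link_flow E n \<pi> j) * G v f \<pi> e - link_flow E n \<pi> e)) \<le> 0"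
proof (intro allI impI ballI)
  fix v \<pi> f
  assume v: "v < n" and \<pi>: "\<pi> \<in> Pi_feas E n C" and f: "f \<in> F_box E C v"
  define L where "L = out_links E v"
  define \<phi> where "\<phi> = link_flow E n \<pi>"
  define f\<pi> where "f\<pi> = restr_out E v \<phi>"
  have "finite L"
    using finite_subset[OF nodes] unfolding L_def out_links_def by simp
  have f\<pi>: "f\<pi> \<in> F_box E C v" unfolding f\<pi>_def \<phi>_def using restr_link_flow_in_F_box[OF \<pi>] .
  have on_L: "f\<pi> e = \<phi> e" if "e \<in> L" for e using that unfolding f\<pi>_def restr_out_def L_def by simp
  have outside: "\<forall>e. e \<notin> L \<longrightarrow> f e = f\<pi> e"
    using f f\<pi> unfolding F_box_def L_def by auto
  have simplex: "(\<Sum>e\<in>L. G v h \<pi> e) = 1" if "h \<in> F_box E C v" for h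
    using G_simplex v \<pi> that unfolding L_def by blast
  have "\<forall>j\<in>out_links E v. \<forall>e\<in>out_links E v. \<forall>h\<in>F_box E C v.
      (\<lambda>t. G v (h(e := t)) \<pi> j) differentiable (at (h e) within {t. 0 \<le> t \<and> ereal t < C e})"
    using G_diff v \<pi> by blast
  moreover have "\<forall>h\<in>F_box E C v. \<forall>j\<in>out_links E v. \<forall>e\<in>out_links E v.
      j \<noteq> e \<longrightarrow> 0 \<le> partial_G C G v j e h \<pi>"
    using cooperativity v \<pi> by blast
  ultimately interpret cooperative_box "F_box E C v" L "\<lambda>h. G v h \<pi>"
    unfolding L_def by (rule cooperative_box_F_box)
  have "(\<Sum>e\<in>L. sgn (f e - f\<pi> e) * ((\<Sum>j\<in>L. \<phi> j) * G v f \<pi> e - f\<pi> e)) \<le> 0"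
  proof (rule deviation_nonpos[OF simplex \<open>finite L\<close> f f\<pi> outside])
    show "0 \<le> (\<Sum>j\<in>L. \<phi> j)" using link_flow_nonneg[OF \<pi>] by (simp add: \<phi>_def sum_nonneg)
    show "(\<Sum>j\<in>L. \<phi> j) * G v f\<pi> \<pi> e = f\<pi> e" if "e \<in> L" for e
      using consistency v \<pi> that on_L[OF that] unfolding L_def \<phi>_def f\<pi>_def by simp
  qed
  then show "(\<Sum>e\<in>out_links E v. sgn (f e - link_flow E n \<pi> e) *
      ((\<Sum>j\<in>out_links E v. link_flow E n \<pi> j) * G v f \<pi> e - link_flow E n \<pi> e)) \<le> 0"
    using on_L unfolding L_def[symmetric] \<phi>_def[symmetric] by (simp cong: sum.cong)
qed

end
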